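(* Let $n\ge1$, identify the symmetric group $\mathfrak S_n$ with the group of permutations of $\mathbb Z/n$, let $\gamma$ be the permutation $i\mapsto i+1$, let $(\mathbb Z/n)^*$ be the subgroup of permutations $i\mapsto ki$ with $\gcd(k,n)=1$, and for $d\mid n$ let $(n/d)\mathbb Z/n$ be the cyclic subgroup of order $d$ generated by $\gamma^{n/d}$ (normalized by $(\mathbb Z/n)^*$). Let $S_n=\operatorname{Ind}_{\langle\gamma\rangle}^{\mathfrak S_n}\chi$, where $\chi$ is a faithful one-dimensional complex character of $\langle\gamma\rangle\cong\mathbb Z/n$. Then, in the representation ring (equivalently, as an identity of characters), \[S_n=\sum_{d\mid n}\mu(d)\,\operatorname{Ind}_{((n/d)\mathbb Z/n)\rtimes(\mathbb Z/n)^*}^{\mathfrak S_n}\mathbb 1,\] where $\mathbb 1$ is the trivial representation and $\mu$ is the Möbius function. *)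

theory Defs
  imports Complex_Main "HOL-Combinatorics.Combinatorics" "HOL-Computational_Algebra.Squarefree"
begin

text \<open>The symmetric group on Z/n, with Z/n realised as {0..<n}; permutations are
  functions nat => nat permuting {..<n} and fixing everything else.\<close>
definition Sym :: "nat \<Rightarrow> (nat \<Rightarrow> nat) set" where
  "Sym n = {p. p permutes {..<n}}"

definition gamma :: "nat \<Rightarrow> nat \<Rightarrow> nat" where
  "gamma n i = (if i < n then Suc i mod n else i)"

definition cyc :: "nat \<Rightarrow> (nat \<Rightarrow> nat) set" where
  "cyc n = {gamma n ^^ j | j. True}"

definition unitmul :: "nat \<Rightarrow> nat \<Rightarrow> nat \<Rightarrow> nat" where
  "unitmul n k i = (if i < n then (k * i) mod n else i)"

definition units_perm :: "nat \<Rightarrow> (nat \<Rightarrow> nat) set" where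
  "units_perm n = {unitmul n k | k. coprime k n}"

definition cyc_sub :: "nat \<Rightarrow> nat \<Rightarrow> (nat \<Rightarrow> nat) set" where
  "cyc_sub n d = {gamma n ^^ ((n div d) * j) | j. True}"

definition semidir :: "nat \<Rightarrow> nat \<Rightarrow> (nat \<Rightarrow> nat) set" where
  "semidir n d = {a \<circ> b | a b. a \<in> cyc_sub n d \<and> b \<in> units_perm n}"

definition ind :: "nat \<Rightarrow> (nat \<Rightarrow> nat) set \<Rightarrow> ((nat \<Rightarrow> nat) \<Rightarrow> complex) \<Rightarrow> (nat \<Rightarrow> nat) \<Rightarrow> complex" where
  "ind n H f g = (1 / of_nat (card H)) *
     (\<Sum>x\<in>Sym n. if inv x \<circ> g \<circ> x \<in> H then f (inv x \<circ> g \<circ> x) else 0)"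

definition moebius :: "nat \<Rightarrow> int" where
  "moebius d = (if squarefree d then (-1) ^ card (prime_factors d) else 0)"

end

theory Submission
  imports Defs "HOL-Number_Theory.Cong"
begin

(*
  Every group in the statement lies in the affine group A = Z/n x| (Z/n)^* of the maps
  i -> v*i + t. By transitivity of induction it suffices that the class function
  Ind_C^A chi - sum_d mu(d) Ind_{K_d}^A 1 on A vanishes. Conjugating i -> u*i + t by
  i -> v*i + s gives i -> u*i + v^-1 ((u - 1) s + t), so both terms can be evaluated by
  counting. Expressing the divisibility conditions that define the K_d as averages of powers
  of the primitive root chi(gamma) and sieving with the Moebius function, both reduce to the
  Ramanujan sum  sum_{j in (Z/n)^*} chi(gamma)^(j t)  when u = 1, and to 0 otherwise.
*)

definition residue_units :: "nat \<Rightarrow> nat set" where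
  "residue_units n = {v. v < n \<and> coprime v n}"

lemma finite_residue_units [simp]: "finite (residue_units n)"
  by (simp add: residue_units_def)

lemma card_residue_units_pos: "n \<ge> 1 \<Longrightarrow> card (residue_units n) > 0"
  by (cases "n = 1") (auto simp: residue_units_def card_gt_0_iff intro!: exI[of _ 1])

definition inv_mod :: "nat \<Rightarrow> nat \<Rightarrow> nat" where
  "inv_mod n v = (SOME w. w < n \<and> [v * w = 1] (mod n))"

lemma inv_mod:
  assumes "n \<ge> 1" "coprime v n"
  shows inv_mod_less: "inv_mod n v < n" and cong_inv_mod: "[v * inv_mod n v = 1] (mod n)"
proof -
  obtain x where "[v * x = 1] (mod n)"
    using cong_solve_coprime_nat[OF assms(2)] by auto
  then have "x mod n < n \<and> [v * (x mod n) = 1] (mod n)"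
    using assms(1) by (simp add: cong_def mod_mult_right_eq)
  then have "inv_mod n v < n \<and> [v * inv_mod n v = 1] (mod n)"
    unfolding inv_mod_def by (rule someI)
  then show "inv_mod n v < n" "[v * inv_mod n v = 1] (mod n)" by auto
qed

lemma coprime_inv_mod:
  assumes "n \<ge> 1" "coprime v n"
  shows "coprime (inv_mod n v) n"
proof -
  have "[inv_mod n v * v = Suc 0] (mod n)"
    using cong_inv_mod[OF assms] by (simp add: mult.commute)
  then show ?thesis unfolding coprime_iff_invertible_nat by blast
qed

lemma sum_residue_units_inv_mod:
  assumes "n \<ge> 1"
  shows "(\<Sum>v\<in>residue_units n. f (inv_mod n v)) = (\<Sum>j\<in>residue_units n. f j)"
proof -
  have inj: "inj_on (inv_mod n) (residue_units n)"
  proof (rule inj_onI)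
    fix v v' assume v: "v \<in> residue_units n" and v': "v' \<in> residue_units n"
      and eq: "inv_mod n v = inv_mod n v'"
    have cop: "coprime v n" "coprime v' n" using v v' by (auto simp: residue_units_def)
    have "[v * inv_mod n v = v' * inv_mod n v] (mod n)"
      using cong_inv_mod[OF assms cop(1)] cong_inv_mod[OF assms cop(2)] eq
      by (metis cong_sym cong_trans)
    then have "[v = v'] (mod n)"
      using cong_mult_rcancel_nat[OF coprime_inv_mod[OF assms cop(1)]] by simp
    then show "v = v'" using v v' by (simp add: cong_def residue_units_def)
  qed
  moreover have "inv_mod n ` residue_units n \<subseteq> residue_units n"
    using inv_mod_less[OF assms] coprime_inv_mod[OF assms]
    by (auto simp: residue_units_def)
  ultimately have "inv_mod n ` residue_units n = residue_units n"
    by (rule endo_inj_surj[OF finite_residue_units, rotated])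
  then show ?thesis using sum.reindex[OF inj, of f] by simp
qed

lemma dvd_pred_iff_mod_eq_1:
  fixes u n :: nat
  assumes "n \<ge> 1"
  shows "n dvd u + n - 1 \<longleftrightarrow> u mod n = 1 mod n"
proof -
  have "n dvd u + n - 1 \<longleftrightarrow> [u + (n - 1) = 0] (mod n)"
    using assms by (simp add: cong_0_iff)
  also have "\<dots> \<longleftrightarrow> [u + (n - 1) + 1 = 0 + 1] (mod n)"
    by (rule cong_add_rcancel_nat[symmetric])
  also have "u + (n - 1) + 1 = u + n" using assms by simp
  finally show ?thesis by (simp add: cong_def)
qed

lemma multiples_lessThan_eq_image:
  fixes d n :: nat
  assumes "d dvd n" "d > 0"
  shows "{j \<in> {..<n}. d dvd j} = (\<lambda>k. d * k) ` {..<n div d}"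
proof -
  have less_iff: "d * k < n \<longleftrightarrow> k < n div d" for k
  proof -
    have "d * k < n \<longleftrightarrow> d * k < d * (n div d)" using assms(1) by simp
    also have "\<dots> \<longleftrightarrow> k < n div d" using assms(2) by simp
    finally show ?thesis .
  qed
  show ?thesis
  proof (intro set_eqI iffI)
    fix j assume "j \<in> {j \<in> {..<n}. d dvd j}"
    then obtain k where "j = d * k" "d * k < n" by auto
    then show "j \<in> (\<lambda>k. d * k) ` {..<n div d}" using less_iff by blast
  qed (auto simp: less_iff)
qed

section \<open>Affine permutations of Z/n\<close>

definition aff :: "nat \<Rightarrow> nat \<Rightarrow> nat \<Rightarrow> nat \<Rightarrow> nat" where
  "aff n t v i = (if i < n then (v * i + t) mod n else i)"

lemma aff_cong:
  assumes "t mod n = t' mod n" "v mod n = v' mod n"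
  shows "aff n t v = aff n t' v'"
  using assms by (auto simp: aff_def fun_eq_iff intro: mod_add_cong mod_mult_cong)

lemma aff_comp: "aff n t v \<circ> aff n t' v' = aff n (v * t' + t) (v * v')"
proof
  fix i
  show "(aff n t v \<circ> aff n t' v') i = aff n (v * t' + t) (v * v') i"
  proof (cases "i < n")
    case True
    then have "(aff n t v \<circ> aff n t' v') i = (v * ((v' * i + t') mod n) + t) mod n"
      by (simp add: aff_def)
    also have "\<dots> = (v * (v' * i + t') + t) mod n"
      by (metis mod_add_left_eq mod_mult_right_eq)
    also have "\<dots> = ((v * v') * i + (v * t' + t)) mod n"
      by (simp add: algebra_simps)
    finally show ?thesis using True by (simp add: aff_def)
  qed (simp add: aff_def)
qed

lemma aff_0_1 [simp]: "aff n 0 1 = id" "aff n 0 (Suc 0) = id"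
  by (auto simp: aff_def)

lemma aff_eq_iff:
  assumes "n \<ge> 1"
  shows "aff n t v = aff n t' v' \<longleftrightarrow> t mod n = t' mod n \<and> v mod n = v' mod n"
proof
  assume eq: "aff n t v = aff n t' v'"
  have t: "t mod n = t' mod n"
    using fun_cong[OF eq, of 0] assms by (simp add: aff_def)
  have "v mod n = v' mod n"
  proof (cases "n = 1")
    case False
    then have "(v + t) mod n = (v' + t') mod n"
      using fun_cong[OF eq, of 1] assms by (simp add: aff_def)
    then have "[v + t = v' + t] (mod n)"
      using t by (metis cong_def mod_add_right_eq)
    then show ?thesis by (metis cong_add_rcancel_nat cong_def)
  qed simp
  with t show "t mod n = t' mod n \<and> v mod n = v' mod n" ..
qed (intro aff_cong; simp)

lemma gamma_eq_aff: "gamma n = aff n 1 1"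
  by (auto simp: gamma_def aff_def fun_eq_iff)

lemma gamma_funpow: "gamma n ^^ j = aff n j 1"
proof (induction j)
  case 0
  show ?case by (simp add: aff_def fun_eq_iff)
next
  case (Suc j)
  then show ?case by (simp add: gamma_eq_aff aff_comp)
qed

lemma unitmul_eq_aff: "unitmul n k = aff n 0 k"
  by (auto simp: unitmul_def aff_def fun_eq_iff)

lemma aff_comp_inverse:
  assumes "n \<ge> 1" and vw: "[v * w = 1] (mod n)"
  shows "aff n (w * (n - s mod n)) w \<circ> aff n s v = id"
    and "aff n s v \<circ> aff n (w * (n - s mod n)) w = id"
proof -
  have s: "s mod n \<le> n" using assms(1) by (simp add: less_imp_le)
  have "(w * s + w * (n - s mod n)) mod n = (w * (s mod n) + w * (n - s mod n)) mod n"
    by (metis mod_add_left_eq mod_mult_right_eq)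
  also have "w * (s mod n) + w * (n - s mod n) = w * n"
    using s by (metis add_mult_distrib2 le_add_diff_inverse)
  finally have "aff n (w * s + w * (n - s mod n)) (w * v) = aff n 0 1"
    using vw by (intro aff_cong) (simp_all add: cong_def mult.commute)
  then show "aff n (w * (n - s mod n)) w \<circ> aff n s v = id"
    by (simp add: aff_comp)
  have "(v * (w * (n - s mod n)) + s) mod n = ((v * w) * (n - s mod n) + s) mod n"
    by (simp add: mult.assoc)
  also have "\<dots> = (1 * (n - s mod n) + s) mod n"
    using vw by (intro mod_add_cong mod_mult_cong) (simp_all add: cong_def)
  also have "\<dots> = 0"
    using s by (metis mod_add_right_eq le_add_diff_inverse2 mod_self mult_1)
  finally have "aff n (v * (w * (n - s mod n)) + s) (v * w) = aff n 0 1"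
    using vw by (intro aff_cong) (simp_all add: cong_def)
  then show "aff n s v \<circ> aff n (w * (n - s mod n)) w = id"
    by (simp add: aff_comp)
qed

lemma
  assumes "n \<ge> 1" "coprime v n"
  shows aff_permutes: "aff n s v permutes {..<n}"
    and inv_aff: "inv (aff n s v) = aff n (inv_mod n v * (n - s mod n)) (inv_mod n v)"
proof -
  note inverse = aff_comp_inverse[OF assms(1) cong_inv_mod[OF assms], of s]
  show "inv (aff n s v) = aff n (inv_mod n v * (n - s mod n)) (inv_mod n v)"
    by (rule inv_unique_comp[OF inverse(2,1)])
  have "bij_betw (aff n s v) {..<n} {..<n}"
  proof (rule bij_betwI[where g = "aff n (inv_mod n v * (n - s mod n)) (inv_mod n v)"])
    show "\<And>x. aff n (inv_mod n v * (n - s mod n)) (inv_mod n v) (aff n s v x) = x"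
      using inverse(1) by (rule pointfree_idE)
    show "\<And>x. aff n s v (aff n (inv_mod n v * (n - s mod n)) (inv_mod n v) x) = x"
      using inverse(2) by (rule pointfree_idE)
  qed (auto simp: aff_def)
  then show "aff n s v permutes {..<n}"
    by (rule bij_imp_permutes) (simp add: aff_def)
qed

(* The coefficient u + n - 1 stands for u - 1 modulo n, avoiding truncated subtraction. *)
lemma conj_aff:
  assumes n: "n \<ge> 1" and v: "coprime v n"
  shows "inv (aff n s v) \<circ> aff n t u \<circ> aff n s v
       = aff n (inv_mod n v * ((u + n - 1) * s + t)) u"
proof -
  let ?w = "inv_mod n v" and ?X = "(u + n - 1) * s + t"
  have "u + n - 1 + 1 = u + n" using n by simp
  then have "(u + n - 1) * s + s = (u + n) * s" by (metis add_mult_distrib mult_1)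
  then have X: "1 * ?X + s = u * s + t + n * s" by (simp add: algebra_simps)
  have "(v * (?w * ?X) + s) mod n = ((v * ?w) * ?X + s) mod n"
    by (simp add: mult.assoc)
  also have "\<dots> = (1 * ?X + s) mod n"
    using cong_inv_mod[OF n v] by (intro mod_add_cong mod_mult_cong) (simp_all add: cong_def)
  also have "\<dots> = (u * s + t) mod n"
    unfolding X by simp
  finally have "aff n (v * (?w * ?X) + s) (v * u) = aff n (u * s + t) (u * v)"
    by (intro aff_cong) (simp_all add: mult.commute)
  then have "aff n s v \<circ> aff n (?w * ?X) u = aff n t u \<circ> aff n s v"
    by (simp only: aff_comp)
  then have "inv (aff n s v) \<circ> aff n t u \<circ> aff n s v
      = inv (aff n s v) \<circ> aff n s v \<circ> aff n (?w * ?X) u"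
    by (simp add: comp_assoc)
  also have "\<dots> = aff n (?w * ?X) u"
    using permutes_inv_o(2)[OF aff_permutes[OF n v]] by simp
  finally show ?thesis .
qed

lemma cyc_eq_image:
  assumes "n \<ge> 1"
  shows "cyc n = (\<lambda>t. aff n t 1) ` {..<n}"
proof (intro set_eqI iffI)
  fix x assume "x \<in> cyc n"
  then obtain j where "x = aff n j 1" unfolding cyc_def gamma_funpow by blast
  also have "\<dots> = aff n (j mod n) 1" by (rule aff_cong) auto
  finally show "x \<in> (\<lambda>t. aff n t 1) ` {..<n}" using assms by auto
qed (auto simp: cyc_def gamma_funpow)

lemma card_cyc:
  assumes "n \<ge> 1"
  shows "card (cyc n) = n"
proof -
  have "inj_on (\<lambda>t. aff n t 1) {..<n}"
    using assms by (auto simp: inj_on_def aff_eq_iff)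
  then show ?thesis unfolding cyc_eq_image[OF assms] by (simp add: card_image)
qed

lemma aff_in_cyc_iff: "n \<ge> 1 \<Longrightarrow> aff n t u \<in> cyc n \<longleftrightarrow> u mod n = 1 mod n"
  unfolding cyc_def gamma_funpow by (auto simp: aff_eq_iff)

lemma aff_in_cyc: "aff n t 1 \<in> cyc n"
  unfolding cyc_def gamma_funpow by blast

lemma semidir_eq_image:
  assumes n: "n \<ge> 1" and d: "d dvd n"
  shows "semidir n d
       = (\<lambda>(t, k). aff n t k) ` ({t. t < n \<and> n div d dvd t} \<times> residue_units n)"
proof (intro set_eqI iffI)
  fix x assume "x \<in> semidir n d"
  then obtain j k where x: "x = aff n (n div d * j) 1 \<circ> aff n 0 k" and k: "coprime k n"
    unfolding semidir_def cyc_sub_def units_perm_def gamma_funpow unitmul_eq_aff by blast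
  have "x = aff n ((n div d * j) mod n) (k mod n)"
    unfolding x aff_comp by (rule aff_cong) simp_all
  moreover have "n div d dvd (n div d * j) mod n"
    using d by (metis dvd_div_mult_self dvd_mod dvd_triv_left)
  ultimately show "x \<in> (\<lambda>(t, k). aff n t k) ` ({t. t < n \<and> n div d dvd t} \<times> residue_units n)"
    using k n by (force simp: residue_units_def)
next
  fix x
  assume "x \<in> (\<lambda>(t, k). aff n t k) ` ({t. t < n \<and> n div d dvd t} \<times> residue_units n)"
  then obtain j k where "x = aff n (n div d * j) 1 \<circ> aff n 0 k" "coprime k n"
    by (auto simp: aff_comp residue_units_def)
  then show "x \<in> semidir n d"
    unfolding semidir_def cyc_sub_def units_perm_def gamma_funpow unitmul_eq_aff by blast
qed

lemma in_semidir_iff: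
  assumes n: "n \<ge> 1" and d: "d dvd n"
  shows "b \<in> semidir n d \<longleftrightarrow> (\<exists>t k. coprime k n \<and> n div d dvd t \<and> b = aff n t k)"
proof
  assume "b \<in> semidir n d"
  then show "\<exists>t k. coprime k n \<and> n div d dvd t \<and> b = aff n t k"
    unfolding semidir_eq_image[OF n d] residue_units_def by auto
next
  assume "\<exists>t k. coprime k n \<and> n div d dvd t \<and> b = aff n t k"
  then obtain t k where tk: "coprime k n" "n div d dvd t" "b = aff n t k" by blast
  have "b = aff n (t mod n) (k mod n)" unfolding tk(3) by (rule aff_cong) simp_all
  moreover have "n div d dvd t mod n"
    using tk(2) d by (metis dvd_div_mult_self dvd_mod dvd_triv_left)
  ultimately show "b \<in> semidir n d"
    unfolding semidir_eq_image[OF n d] residue_units_def using tk(1) n by auto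
qed

lemma aff_in_semidir_iff:
  assumes n: "n \<ge> 1" and d: "d dvd n" and k: "coprime k n"
  shows "aff n t k \<in> semidir n d \<longleftrightarrow> n div d dvd t"
proof
  assume "aff n t k \<in> semidir n d"
  then obtain t' k' where "n div d dvd t'" "aff n t k = aff n t' k'"
    unfolding in_semidir_iff[OF n d] by blast
  moreover have "n div d dvd n" using d by (metis dvd_div_mult_self dvd_triv_left)
  ultimately show "n div d dvd t"
    unfolding aff_eq_iff[OF n] by (metis dvd_mod_iff)
qed (use k in \<open>auto simp: in_semidir_iff[OF n d]\<close>)

lemma card_semidir:
  assumes n: "n \<ge> 1" and d: "d dvd n"
  shows "card (semidir n d) = d * card (residue_units n)"
proof -
  let ?m = "n div d"
  have dm: "d * ?m = n" using d by simp
  have m_pos: "?m > 0" using dm n by (metis gr0I mult_0_right not_one_le_zero)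
  have m: "?m dvd n" "n div ?m = d"
    using dm m_pos by (metis dvd_triv_right, metis nonzero_mult_div_cancel_right not_gr0)
  have "{t. t < n \<and> ?m dvd t} = (\<lambda>k. ?m * k) ` {..<d}"
    using multiples_lessThan_eq_image[OF m(1) m_pos] m(2) by auto
  then have multiples: "card {t. t < n \<and> ?m dvd t} = d"
    using m_pos by (simp add: card_image inj_on_def)
  have "inj_on (\<lambda>(t, k). aff n t k) ({t. t < n \<and> ?m dvd t} \<times> residue_units n)"
    using n by (auto simp: inj_on_def aff_eq_iff residue_units_def)
  then show ?thesis
    unfolding semidir_eq_image[OF n d]
    by (simp add: card_image card_cartesian_product multiples)
qed

lemma in_semidir_n_iff:
  assumes "n \<ge> 1"
  shows "b \<in> semidir n n \<longleftrightarrow> (\<exists>t k. coprime k n \<and> b = aff n t k)"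
  using in_semidir_iff[OF assms dvd_refl] assms by simp

lemma sum_semidir_n:
  assumes n: "n \<ge> 1"
  shows "(\<Sum>y\<in>semidir n n. F y) = (\<Sum>s<n. \<Sum>v\<in>residue_units n. F (aff n s v))"
proof -
  have inj: "inj_on (\<lambda>(s, v). aff n s v) ({..<n} \<times> residue_units n)"
    using n by (auto simp: inj_on_def aff_eq_iff residue_units_def)
  have "semidir n n = (\<lambda>(s, v). aff n s v) ` ({..<n} \<times> residue_units n)"
    using semidir_eq_image[OF n dvd_refl] n by (simp add: lessThan_def)
  then have "(\<Sum>y\<in>semidir n n. F y) = (\<Sum>(s, v)\<in>{..<n} \<times> residue_units n. F (aff n s v))"
    by (simp only:) (subst sum.reindex[OF inj], simp add: case_prod_beta)
  also have "\<dots> = (\<Sum>s<n. \<Sum>v\<in>residue_units n. F (aff n s v))"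
    by (rule sum.cartesian_product[symmetric])
  finally show ?thesis .
qed

lemma semidir_subset_semidir_n: "n \<ge> 1 \<Longrightarrow> d dvd n \<Longrightarrow> semidir n d \<subseteq> semidir n n"
  using in_semidir_iff in_semidir_n_iff by blast

lemma cyc_subset_semidir_n: "n \<ge> 1 \<Longrightarrow> cyc n \<subseteq> semidir n n"
  using in_semidir_n_iff[of n] coprime_1_left unfolding cyc_def gamma_funpow by blast

lemma semidir_n_comp:
  assumes n: "n \<ge> 1" and "a \<in> semidir n n" "b \<in> semidir n n"
  shows "a \<circ> b \<in> semidir n n"
proof -
  obtain t k t' k' where "coprime k n" "a = aff n t k" "coprime k' n" "b = aff n t' k'"
    using assms in_semidir_n_iff[OF n] by meson
  then show ?thesis
    unfolding in_semidir_n_iff[OF n] by (metis aff_comp coprime_mult_left_iff)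
qed

lemma
  assumes n: "n \<ge> 1" and a: "a \<in> semidir n n"
  shows semidir_n_permutes: "a permutes {..<n}"
    and inv_in_semidir_n: "inv a \<in> semidir n n"
proof -
  obtain t k where tk: "coprime k n" "a = aff n t k"
    using a in_semidir_n_iff[OF n] by blast
  show "a permutes {..<n}" unfolding tk(2) by (rule aff_permutes[OF n tk(1)])
  show "inv a \<in> semidir n n"
    unfolding tk(2) inv_aff[OF n tk(1)] in_semidir_n_iff[OF n]
    using coprime_inv_mod[OF n tk(1)] by blast
qed

section \<open>Moebius inversion\<close>

lemma moebius_eq_0_if_square_dvd:
  assumes "prime p" "p\<^sup>2 dvd d"
  shows "moebius d = 0"
proof -
  have "\<not> squarefree d" using assms by (intro not_squarefreeI) auto
  then show ?thesis by (simp add: moebius_def)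
qed

lemma moebius_prime_mult:
  fixes p d :: nat
  assumes p: "prime p" and "\<not> p dvd d" "d > 0"
  shows "moebius (p * d) = - moebius d"
proof -
  have cop: "coprime p d" using assms by (simp add: prime_imp_coprime)
  have "squarefree (p * d) \<longleftrightarrow> squarefree d"
    using squarefree_mult_coprime[OF cop squarefree_prime[OF p]] squarefree_mono[of d "p * d"]
    by auto
  moreover have "prime_factors (p * d) = insert p (prime_factors d)"
    using assms by (simp add: prime_factors_product prime_factorization_prime)
  moreover have "p \<notin> prime_factors d" using assms(2) by auto
  ultimately show ?thesis by (simp add: moebius_def)
qed

lemma sum_moebius_dvd:
  assumes "g \<ge> 1"
  shows "(\<Sum>d | d dvd g. moebius d) = (if g = 1 then 1 else 0)"
proof (cases "g = 1")
  case False
  obtain p where p: "prime p" "p dvd g" using prime_factor_nat[OF False] by blast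
  define D where "D = {d. d dvd g \<and> \<not> p dvd d}"
  define E where "E = {d. d dvd g \<and> p dvd d}"
  have fin: "finite D" "finite E" using assms by (simp_all add: D_def E_def)
  have "{d. d dvd g} = D \<union> E" "D \<inter> E = {}" by (auto simp: D_def E_def)
  then have "(\<Sum>d | d dvd g. moebius d) = (\<Sum>d\<in>D. moebius d) + (\<Sum>d\<in>E. moebius d)"
    using sum.union_disjoint[OF fin] by simp
  also have "(\<Sum>d\<in>E. moebius d) = (\<Sum>d\<in>(\<lambda>e. p * e) ` D. moebius d)"
  proof (rule sum.mono_neutral_right[OF fin(2)])
    show "(\<lambda>e. p * e) ` D \<subseteq> E"
    proof
      fix d assume "d \<in> (\<lambda>e. p * e) ` D"
      then obtain e where e: "d = p * e" "e dvd g" "\<not> p dvd e" by (auto simp: D_def)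
      then have "p * e dvd g" using p by (simp add: divides_mult prime_imp_coprime)
      then show "d \<in> E" using e by (simp add: E_def)
    qed
    show "\<forall>d \<in> E - (\<lambda>e. p * e) ` D. moebius d = 0"
    proof
      fix d assume d: "d \<in> E - (\<lambda>e. p * e) ` D"
      then obtain e where e: "d = p * e" by (auto simp: E_def)
      then have "e dvd g" using d by (metis DiffD1 E_def dvd_mult_right mem_Collect_eq)
      then have "p dvd e" using d e by (auto simp: D_def)
      then show "moebius d = 0"
        using p(1) e by (intro moebius_eq_0_if_square_dvd) (auto simp: power2_eq_square)
    qed
  qed
  also have "\<dots> = (\<Sum>e\<in>D. moebius (p * e))"
    using p(1) by (intro sum.reindex_cong[where l = "\<lambda>e. p * e"]) (auto simp: inj_on_def)
  also have "\<dots> = (\<Sum>e\<in>D. - moebius e)"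
  proof (rule sum.cong[OF refl])
    fix e assume "e \<in> D"
    then show "moebius (p * e) = - moebius e"
      using p(1) assms by (intro moebius_prime_mult) (auto simp: D_def intro: dvd_pos_nat)
  qed
  finally show ?thesis using False by (simp add: sum_negf)
qed (simp add: moebius_def)

lemma sum_multiples_lessThan:
  fixes d n :: nat
  assumes "d dvd n" "d > 0"
  shows "(\<Sum>k<n div d. G (d * k)) = (\<Sum>j<n. if d dvd j then G j else 0)"
proof -
  have "(\<Sum>k<n div d. G (d * k)) = (\<Sum>j\<in>(\<lambda>k. d * k) ` {..<n div d}. G j)"
    using assms(2) by (subst sum.reindex) (auto simp: inj_on_def)
  also have "\<dots> = (\<Sum>j<n. if d dvd j then G j else 0)"
    unfolding multiples_lessThan_eq_image[OF assms, symmetric] by (rule sum.inter_filter) simp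
  finally show ?thesis .
qed

lemma sum_moebius_sieve:
  fixes G :: "nat \<Rightarrow> 'a :: comm_ring_1"
  assumes n: "n \<ge> 1"
  shows "(\<Sum>d | d dvd n. of_int (moebius d) * (\<Sum>k<n div d. G (d * k)))
       = (\<Sum>j\<in>residue_units n. G j)"
proof -
  have pos: "d dvd n \<Longrightarrow> d > 0" for d using n by (auto intro: dvd_pos_nat)
  have coprime_sieve: "(\<Sum>d | d dvd n. if d dvd j then of_int (moebius d) else 0)
      = (if coprime j n then 1 else (0 :: 'a))" for j
  proof -
    have "(\<Sum>d | d dvd n. if d dvd j then of_int (moebius d) else 0)
        = (\<Sum>d | d dvd gcd j n. of_int (moebius d) :: 'a)"
      using n by (subst sum.inter_filter[symmetric]) (auto intro!: sum.cong)
    also have "\<dots> = (if coprime j n then 1 else 0)"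
      using n sum_moebius_dvd[of "gcd j n"]
      by (simp add: coprime_iff_gcd_eq_1 Suc_le_eq flip: of_int_sum)
    finally show ?thesis .
  qed
  have "(\<Sum>d | d dvd n. of_int (moebius d) * (\<Sum>k<n div d. G (d * k)))
      = (\<Sum>d | d dvd n. \<Sum>j<n. if d dvd j then of_int (moebius d) * G j else 0)"
  proof (rule sum.cong[OF refl])
    fix d assume "d \<in> {d. d dvd n}"
    then show "of_int (moebius d) * (\<Sum>k<n div d. G (d * k))
        = (\<Sum>j<n. if d dvd j then of_int (moebius d) * G j else 0)"
      by (auto simp: sum_multiples_lessThan pos sum_distrib_left intro!: sum.cong)
  qed
  also have "\<dots> = (\<Sum>j<n. G j * (\<Sum>d | d dvd n. if d dvd j then of_int (moebius d) else 0))"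
    by (subst sum.swap) (auto simp: sum_distrib_left mult.commute intro!: sum.cong)
  also have "\<dots> = (\<Sum>j<n. if coprime j n then G j else 0)"
    by (simp add: coprime_sieve if_distrib[of "(*) _"] cong: if_cong)
  also have "\<dots> = (\<Sum>j\<in>residue_units n. G j)"
    by (simp add: sum.inter_filter residue_units_def flip: lessThan_iff)
  finally show ?thesis .
qed

section \<open>Sums of powers of a primitive root of unity\<close>

locale primitive_root =
  fixes n :: nat and z :: complex
  assumes n: "n \<ge> 1"
    and power_eq_power_iff: "\<And>a b. z ^ a = z ^ b \<longleftrightarrow> a mod n = b mod n"
begin

lemma power_eq_1_iff: "z ^ a = 1 \<longleftrightarrow> n dvd a"
  using power_eq_power_iff[of a 0] by (simp add: dvd_eq_mod_eq_0)

lemma sum_powers_eq: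
  assumes "n dvd a * m"
  shows "(\<Sum>k<m. (z ^ a) ^ k) = (if n dvd a then of_nat m else 0)"
proof -
  have "(z ^ a) ^ m = 1" using assms by (simp add: power_eq_1_iff flip: power_mult)
  moreover have "z ^ a = 1 \<longleftrightarrow> n dvd a" by (rule power_eq_1_iff)
  ultimately show ?thesis by (simp add: sum_gp_strict)
qed

lemma dvd_indicator_eq:
  assumes d: "d dvd n"
  shows "(if n div d dvd X then 1 else 0) = (\<Sum>k<n div d. z ^ (d * k * X)) / of_nat (n div d)"
proof -
  let ?m = "n div d"
  have dm: "d * ?m = n" using d by simp
  then have "d > 0" "?m > 0" using n by (auto intro: gr0I)
  have "(\<Sum>k<?m. z ^ (d * k * X)) = (\<Sum>k<?m. (z ^ (d * X)) ^ k)"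
    by (simp add: mult_ac flip: power_mult)
  also have "\<dots> = (if n dvd d * X then of_nat ?m else 0)"
  proof (rule sum_powers_eq)
    have "d * X * ?m = n * X" using dm by (simp add: mult_ac)
    then show "n dvd d * X * ?m" by (metis dvd_triv_left)
  qed
  also have "n dvd d * X \<longleftrightarrow> ?m dvd X"
    using \<open>d > 0\<close> by (subst dm[symmetric]) simp
  finally show ?thesis using \<open>?m > 0\<close> by simp
qed

lemma sum_moebius_count_multiples:
  "(\<Sum>d | d dvd n. of_int (moebius d) * (\<Sum>s<n. if n div d dvd c * s + t then 1 else 0) / of_nat d)
     = (if n dvd c then \<Sum>j\<in>residue_units n. z ^ (j * t) else 0)"
proof -
  define G where "G j = (\<Sum>s<n. z ^ (j * (c * s + t))) / of_nat n" for j
  have count: "(\<Sum>s<n. if n div d dvd c * s + t then 1 else 0) / of_nat d = (\<Sum>k<n div d. G (d * k))"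
    if d: "d dvd n" for d
  proof -
    have "of_nat d * of_nat (n div d) = (of_nat n :: complex)"
      using d by (simp flip: of_nat_mult)
    then have "(\<Sum>s<n. if n div d dvd c * s + t then 1 else 0) / of_nat d
        = (\<Sum>s<n. \<Sum>k<n div d. z ^ (d * k * (c * s + t))) / of_nat n"
      by (simp add: dvd_indicator_eq[OF d] sum_divide_distrib divide_divide_eq_left mult.commute)
    also have "\<dots> = (\<Sum>k<n div d. G (d * k))"
      by (subst sum.swap) (simp add: G_def sum_divide_distrib mult.assoc)
    finally show ?thesis .
  qed
  have unit: "G j = (if n dvd c then z ^ (j * t) else 0)" if j: "j \<in> residue_units n" for j
  proof -
    have "G j = z ^ (j * t) * (\<Sum>s<n. (z ^ (j * c)) ^ s) / of_nat n"
      by (simp add: G_def sum_distrib_left algebra_simps power_add flip: power_mult)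
    moreover have "n dvd j * c \<longleftrightarrow> n dvd c"
      using j by (simp add: residue_units_def coprime_dvd_mult_right_iff coprime_commute)
    ultimately show ?thesis
      using n by (simp add: sum_powers_eq[of "j * c" n])
  qed
  have "(\<Sum>d | d dvd n. of_int (moebius d) * (\<Sum>s<n. if n div d dvd c * s + t then 1 else 0) / of_nat d)
      = (\<Sum>d | d dvd n. of_int (moebius d) * (\<Sum>k<n div d. G (d * k)))"
    by (intro sum.cong) (simp_all add: count flip: times_divide_eq_right)
  also have "\<dots> = (\<Sum>j\<in>residue_units n. G j)"
    by (rule sum_moebius_sieve[OF n])
  also have "\<dots> = (if n dvd c then \<Sum>j\<in>residue_units n. z ^ (j * t) else 0)"
    by (simp add: unit)
  finally show ?thesis .
qed

end

section \<open>Conjugation sums over the symmetric group\<close>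

definition scaled_indicator ::
    "(nat \<Rightarrow> nat) set \<Rightarrow> ((nat \<Rightarrow> nat) \<Rightarrow> complex) \<Rightarrow> (nat \<Rightarrow> nat) \<Rightarrow> complex" where
  "scaled_indicator H f b = (if b \<in> H then f b / of_nat (card H) else 0)"

lemma ind_eq_sum_scaled_indicator:
  "ind n H f g = (\<Sum>x\<in>Sym n. scaled_indicator H f (inv x \<circ> g \<circ> x))"
  unfolding ind_def scaled_indicator_def by (auto simp: sum_distrib_left intro!: sum.cong)

lemma finite_Sym [simp]: "finite (Sym n)"
  unfolding Sym_def by (rule finite_permutations) simp

lemma conj_in_Sym: "x \<in> Sym n \<Longrightarrow> g \<in> Sym n \<Longrightarrow> inv x \<circ> g \<circ> x \<in> Sym n"
  unfolding Sym_def by (auto intro: permutes_compose permutes_inv)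

lemma sum_Sym_comp_right:
  assumes "y \<in> Sym n"
  shows "(\<Sum>x\<in>Sym n. F (x \<circ> y)) = (\<Sum>x\<in>Sym n. F x)"
proof -
  have y: "y permutes {..<n}" using assms by (simp add: Sym_def)
  have "bij_betw (\<lambda>x. x \<circ> y) (Sym n) (Sym n)"
  proof (rule bij_betwI[where g = "\<lambda>x. x \<circ> inv y"])
    show "(\<lambda>x. x \<circ> y) \<in> Sym n \<rightarrow> Sym n" "(\<lambda>x. x \<circ> inv y) \<in> Sym n \<rightarrow> Sym n"
      using y permutes_inv[OF y] by (auto simp: Sym_def intro: permutes_compose)
    show "x \<circ> y \<circ> inv y = x" "x \<circ> inv y \<circ> y = x" for x
      using permutes_inv_o[OF y] by (simp_all add: comp_assoc)
  qed
  then show ?thesis by (rule sum.reindex_bij_betw)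
qed

(* Transitivity of induction through A: replace x by its right translates x \<circ> y, y \<in> A. *)
lemma sum_conj_eq_0_if_sums_over_subset_vanish:
  fixes F :: "(nat \<Rightarrow> nat) \<Rightarrow> 'a :: {field, ring_char_0}"
  assumes A: "A \<subseteq> Sym n" "A \<noteq> {}"
    and vanish: "\<And>h. h \<in> Sym n \<Longrightarrow> (\<Sum>y\<in>A. F (inv y \<circ> h \<circ> y)) = 0"
    and g: "g \<in> Sym n"
  shows "(\<Sum>x\<in>Sym n. F (inv x \<circ> g \<circ> x)) = 0"
proof -
  let ?S = "\<Sum>x\<in>Sym n. F (inv x \<circ> g \<circ> x)"
  have "of_nat (card A) * ?S = (\<Sum>y\<in>A. ?S)" by simp
  also have "\<dots> = (\<Sum>y\<in>A. \<Sum>x\<in>Sym n. F (inv (x \<circ> y) \<circ> g \<circ> (x \<circ> y)))"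
  proof (rule sum.cong[OF refl])
    fix y assume "y \<in> A"
    then show "?S = (\<Sum>x\<in>Sym n. F (inv (x \<circ> y) \<circ> g \<circ> (x \<circ> y)))"
      using A(1) sum_Sym_comp_right[of y n "\<lambda>x. F (inv x \<circ> g \<circ> x)"] by auto
  qed
  also have "\<dots> = (\<Sum>x\<in>Sym n. \<Sum>y\<in>A. F (inv y \<circ> (inv x \<circ> g \<circ> x) \<circ> y))"
  proof (subst sum.swap, intro sum.cong refl)
    fix x y assume "x \<in> Sym n" "y \<in> A"
    then have "inv (x \<circ> y) = inv y \<circ> inv x"
      using A(1) by (intro o_inv_distrib permutes_bij) (auto simp: Sym_def)
    then show "F (inv (x \<circ> y) \<circ> g \<circ> (x \<circ> y)) = F (inv y \<circ> (inv x \<circ> g \<circ> x) \<circ> y)"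
      by (simp add: comp_assoc)
  qed
  also have "\<dots> = 0"
    using g by (simp add: vanish conj_in_Sym)
  finally show ?thesis
    using A finite_subset[OF A(1)] by simp
qed

lemma sum_conj_eq_0_outside_group:
  assumes comp: "\<And>a b. a \<in> A \<Longrightarrow> b \<in> A \<Longrightarrow> a \<circ> b \<in> A"
    and inv: "\<And>a. a \<in> A \<Longrightarrow> inv a \<in> A" and bij: "\<And>a. a \<in> A \<Longrightarrow> bij a"
    and support: "\<And>b. b \<notin> A \<Longrightarrow> F b = 0" and h: "h \<notin> A"
  shows "(\<Sum>y\<in>A. F (inv y \<circ> h \<circ> y)) = 0"
proof (intro sum.neutral ballI support notI)
  fix y assume y: "y \<in> A" and "inv y \<circ> h \<circ> y \<in> A"
  then have "y \<circ> (inv y \<circ> h \<circ> y) \<circ> inv y \<in> A" by (simp add: comp inv)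
  moreover have "y \<circ> inv y = id"
    using bij[OF y] bij_is_surj surj_iff by blast
  then have "y \<circ> (inv y \<circ> h \<circ> y) \<circ> inv y = h"
    by (simp add: comp_assoc flip: comp_assoc[of y "inv y"])
  ultimately show False using h by simp
qed

section \<open>The Moebius defect vanishes\<close>

definition moebius_defect :: "nat \<Rightarrow> ((nat \<Rightarrow> nat) \<Rightarrow> complex) \<Rightarrow> (nat \<Rightarrow> nat) \<Rightarrow> complex" where
  "moebius_defect n chi b = scaled_indicator (cyc n) chi b
     - (\<Sum>d | d dvd n. of_int (moebius d) * scaled_indicator (semidir n d) (\<lambda>_. 1) b)"

lemma ind_diff_eq_sum_moebius_defect:
  "ind n (cyc n) chi g - (\<Sum>d | d dvd n. of_int (moebius d) * ind n (semidir n d) (\<lambda>_. 1) g)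
     = (\<Sum>x\<in>Sym n. moebius_defect n chi (inv x \<circ> g \<circ> x))"
  unfolding ind_eq_sum_scaled_indicator moebius_defect_def
  by (simp add: sum_subtractf sum_distrib_left sum.swap[of _ "Sym n"])

locale faithful_cyclic_character =
  fixes n :: nat and chi :: "(nat \<Rightarrow> nat) \<Rightarrow> complex"
  assumes n: "n \<ge> 1"
    and hom: "\<forall>a\<in>cyc n. \<forall>b\<in>cyc n. chi (a \<circ> b) = chi a * chi b"
    and nonzero: "\<forall>a\<in>cyc n. chi a \<noteq> 0"
    and faithful: "inj_on chi (cyc n)"
begin

lemma chi_aff: "chi (aff n t 1) = chi (gamma n) ^ t"
proof (induction t)
  case 0
  have "chi id = chi id * chi id"
    using hom aff_in_cyc[of n 0] by (metis aff_0_1(1) id_comp)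
  then show ?case using nonzero aff_in_cyc[of n 0] by (simp add: id_def)
next
  case (Suc t)
  have "aff n (Suc t) 1 = gamma n \<circ> aff n t 1" by (simp add: gamma_eq_aff aff_comp)
  moreover have "chi (gamma n \<circ> aff n t 1) = chi (gamma n) * chi (aff n t 1)"
    using hom aff_in_cyc[of n 1] aff_in_cyc[of n t] by (simp add: gamma_eq_aff)
  ultimately show ?case using Suc.IH by (simp only: power_Suc)
qed

sublocale primitive_root n "chi (gamma n)"
proof
  show "chi (gamma n) ^ a = chi (gamma n) ^ b \<longleftrightarrow> a mod n = b mod n" for a b
    using faithful aff_in_cyc[of n a] aff_in_cyc[of n b]
    by (auto simp flip: chi_aff simp: aff_eq_iff[OF n] inj_on_eq_iff intro: aff_cong)
qed (fact n)

lemma moebius_defect_conj_aff: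
  assumes u: "coprime u n" and v: "coprime v n"
  shows "moebius_defect n chi (inv (aff n s v) \<circ> aff n t u \<circ> aff n s v)
     = (if n dvd u + n - 1 then chi (gamma n) ^ (inv_mod n v * t) else 0) / of_nat n
       - (\<Sum>d | d dvd n. of_int (moebius d) * (if n div d dvd (u + n - 1) * s + t then 1 else 0)
            / of_nat (d * card (residue_units n)))"
proof -
  let ?c = "u + n - 1" and ?w = "inv_mod n v"
  let ?b = "aff n (?w * (?c * s + t)) u"
  have cyc_part: "scaled_indicator (cyc n) chi ?b
      = (if n dvd ?c then chi (gamma n) ^ (?w * t) else 0) / of_nat n"
  proof (cases "n dvd ?c")
    case True
    then obtain k where k: "?c = n * k" ..
    have "?w * (?c * s + t) = ?w * t + n * (?w * k * s)"
      unfolding k by (simp add: algebra_simps)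
    moreover have u1: "u mod n = 1 mod n"
      using True dvd_pred_iff_mod_eq_1[OF n] by blast
    ultimately have "?b = aff n (?w * t + n * (?w * k * s)) 1"
      by (intro aff_cong) simp_all
    then have "chi ?b = chi (gamma n) ^ (?w * t + n * (?w * k * s))"
      by (simp only: chi_aff)
    also have "\<dots> = chi (gamma n) ^ (?w * t)"
      by (simp add: power_eq_power_iff)
    finally have "chi ?b = chi (gamma n) ^ (?w * t)" .
    then show ?thesis
      using True u1 by (simp add: scaled_indicator_def aff_in_cyc_iff[OF n] card_cyc[OF n])
  next
    case False
    then have "?b \<notin> cyc n"
      using aff_in_cyc_iff[OF n] dvd_pred_iff_mod_eq_1[OF n] by blast
    with False show ?thesis by (simp add: scaled_indicator_def)
  qed
  have semidir_part: "scaled_indicator (semidir n d) (\<lambda>_. 1) ?b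
      = (if n div d dvd ?c * s + t then 1 else 0) / of_nat (d * card (residue_units n))"
    if d: "d dvd n" for d
  proof -
    have "coprime ?w (n div d)"
      using coprime_inv_mod[OF n v] d by (metis coprime_commute coprime_mult_right_iff dvd_div_mult_self)
    then have "n div d dvd ?w * (?c * s + t) \<longleftrightarrow> n div d dvd ?c * s + t"
      by (simp add: coprime_dvd_mult_right_iff coprime_commute)
    then show ?thesis
      by (simp add: scaled_indicator_def aff_in_semidir_iff[OF n d u] card_semidir[OF n d])
  qed
  have "(\<Sum>d | d dvd n. of_int (moebius d) * scaled_indicator (semidir n d) (\<lambda>_. 1) ?b)
      = (\<Sum>d | d dvd n. of_int (moebius d) * (if n div d dvd ?c * s + t then 1 else 0)
            / of_nat (d * card (residue_units n)))"
    by (rule sum.cong[OF refl]) (simp only: mem_Collect_eq semidir_part times_divide_eq_right)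
  then show ?thesis
    unfolding conj_aff[OF n v] moebius_defect_def cyc_part by (rule arg_cong)
qed

lemma sum_moebius_defect_conj_aff:
  assumes u: "coprime u n"
  shows "(\<Sum>y\<in>semidir n n. moebius_defect n chi (inv y \<circ> aff n t u \<circ> y)) = 0"
proof -
  let ?c = "u + n - 1" and ?U = "residue_units n"
  let ?f = "\<lambda>v. if n dvd ?c then chi (gamma n) ^ (inv_mod n v * t) else 0"
  let ?g = "\<lambda>d s. if n div d dvd ?c * s + t then 1 else 0 :: complex"
  have "(\<Sum>y\<in>semidir n n. moebius_defect n chi (inv y \<circ> aff n t u \<circ> y))
      = (\<Sum>s<n. \<Sum>v\<in>?U. ?f v / of_nat n
          - (\<Sum>d | d dvd n. of_int (moebius d) * ?g d s / of_nat (d * card ?U)))"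
    unfolding sum_semidir_n[OF n] by (simp add: moebius_defect_conj_aff u residue_units_def)
  also have "\<dots> = (\<Sum>v\<in>?U. ?f v) - (\<Sum>d | d dvd n. of_int (moebius d) * (\<Sum>s<n. ?g d s) / of_nat d)"
  proof -
    have "?U \<noteq> {}" using card_residue_units_pos[OF n] by auto
    then have "(\<Sum>s<n. \<Sum>v\<in>?U. \<Sum>d | d dvd n. of_int (moebius d) * ?g d s / of_nat (d * card ?U))
        = (\<Sum>d | d dvd n. of_int (moebius d) * (\<Sum>s<n. ?g d s) / of_nat d)"
      by (simp add: sum.swap[of _ "{..<n}"] sum_distrib_left sum_divide_distrib)
    moreover have "(\<Sum>s<n. \<Sum>v\<in>?U. ?f v / of_nat n) = (\<Sum>v\<in>?U. ?f v)"
      using n by (simp add: sum_divide_distrib[symmetric])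
    ultimately show ?thesis by (simp add: sum_subtractf)
  qed
  also have "(\<Sum>v\<in>?U. ?f v) = (if n dvd ?c then \<Sum>j\<in>?U. chi (gamma n) ^ (j * t) else 0)"
    using sum_residue_units_inv_mod[OF n, of "\<lambda>j. chi (gamma n) ^ (j * t)"] by simp
  also have "(\<Sum>d | d dvd n. of_int (moebius d) * (\<Sum>s<n. ?g d s) / of_nat d) = \<dots>"
    by (rule sum_moebius_count_multiples)
  finally show ?thesis unfolding comp_def by simp
qed

lemma sum_moebius_defect_conj:
  assumes h: "h \<in> Sym n"
  shows "(\<Sum>y\<in>semidir n n. moebius_defect n chi (inv y \<circ> h \<circ> y)) = 0"
proof (cases "h \<in> semidir n n")
  case True
  then obtain t u where "coprime u n" "h = aff n t u"
    using in_semidir_n_iff[OF n] by blast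
  then show ?thesis by (simp add: sum_moebius_defect_conj_aff)
next
  case False
  show ?thesis
  proof (rule sum_conj_eq_0_outside_group[OF _ _ _ _ False])
    show "moebius_defect n chi b = 0" if "b \<notin> semidir n n" for b
    proof -
      have "b \<notin> cyc n" "\<And>d. d dvd n \<Longrightarrow> b \<notin> semidir n d"
        using that cyc_subset_semidir_n[OF n] semidir_subset_semidir_n[OF n] by blast+
      then show ?thesis by (simp add: moebius_defect_def scaled_indicator_def)
    qed
    show "bij a" if "a \<in> semidir n n" for a
      using semidir_n_permutes[OF n that] by (rule permutes_bij)
  qed (simp_all add: semidir_n_comp[OF n] inv_in_semidir_n[OF n])
qed

theorem ind_cyc_eq_sum_moebius_ind_semidir:
  assumes g: "g \<in> Sym n"
  shows "ind n (cyc n) chi g = (\<Sum>d | d dvd n. of_int (moebius d) * ind n (semidir n d) (\<lambda>_. 1) g)"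
proof -
  have "semidir n n \<subseteq> Sym n"
    using semidir_n_permutes[OF n] by (auto simp: Sym_def)
  moreover have "semidir n n \<noteq> {}"
    using card_semidir[OF n dvd_refl] card_residue_units_pos[OF n] n by force
  ultimately have "(\<Sum>x\<in>Sym n. moebius_defect n chi (inv x \<circ> g \<circ> x)) = 0"
    using sum_moebius_defect_conj g by (rule sum_conj_eq_0_if_sums_over_subset_vanish)
  then show ?thesis
    using ind_diff_eq_sum_moebius_defect[of n chi g] by simp
qed

end

theorem mainTheorem5:
  fixes n :: nat and chi :: "(nat \<Rightarrow> nat) \<Rightarrow> complex"
  assumes n: "n \<ge> 1"
    and hom: "\<forall>a\<in>cyc n. \<forall>b\<in>cyc n. chi (a \<circ> b) = chi a * chi b"
    and nonzero: "\<forall>a\<in>cyc n. chi a \<noteq> 0"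
    and faithful: "inj_on chi (cyc n)"
  shows "\<forall>g\<in>Sym n. ind n (cyc n) chi g =
           (\<Sum>d | d dvd n. of_int (moebius d) * ind n (semidir n d) (\<lambda>_. 1) g)"
proof -
  interpret faithful_cyclic_character n chi
    using assms by unfold_locales
  show ?thesis using ind_cyc_eq_sum_moebius_ind_semidir by blast
qed

end
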